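(* Let $S$ be a stable semigroup. If $S$ is DSC, then $S$ is a group.
   Context: Green's relations on $S$: $s\,\mathcal{R}\,t\iff sS^1=tS^1$, $s\,\mathcal{L}\,t\iff S^1s=S^1t$, $s\,\mathcal{J}\,t\iff S^1sS^1=S^1tS^1$, where $S^1$ is $S$ with an identity adjoined. $S$ is stable if for all $s,x\in S$: $x\,\mathcal{J}\,sx\Rightarrow x\,\mathcal{L}\,sx$ and $x\,\mathcal{J}\,xs\Rightarrow x\,\mathcal{R}\,xs$. A diagonal subsemigroup of $S\times S$ is a subsemigroup containing $\{(s,s)\colon s\in S\}$; a congruence is a symmetric and transitive diagonal subsemigroup; $S$ is DSC if every diagonal subsemigroup of $S\times S$ is a congruence on $S$. *)

theory Defs
  imports Main
begin

text \<open>Principal ideals using S^1 (S with identity adjoined), for a semigroup given as a type.\<close>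
definition right_ideal1 :: "'a::semigroup_mult \<Rightarrow> 'a set" where
  "right_ideal1 s = insert s {s * x | x. True}"

definition left_ideal1 :: "'a::semigroup_mult \<Rightarrow> 'a set" where
  "left_ideal1 s = insert s {x * s | x. True}"

definition two_ideal1 :: "'a::semigroup_mult \<Rightarrow> 'a set" where
  "two_ideal1 s = {s} \<union> {x * s | x. True} \<union> {s * y | y. True} \<union> {x * s * y | x y. True}"

definition greenR :: "'a::semigroup_mult \<Rightarrow> 'a \<Rightarrow> bool" where
  "greenR s t \<longleftrightarrow> right_ideal1 s = right_ideal1 t"

definition greenL :: "'a::semigroup_mult \<Rightarrow> 'a \<Rightarrow> bool" where
  "greenL s t \<longleftrightarrow> left_ideal1 s = left_ideal1 t"

definition greenJ :: "'a::semigroup_mult \<Rightarrow> 'a \<Rightarrow> bool" where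
  "greenJ s t \<longleftrightarrow> two_ideal1 s = two_ideal1 t"

definition stable_semigroup :: "'a::semigroup_mult itself \<Rightarrow> bool" where
  "stable_semigroup _ \<longleftrightarrow>
     (\<forall>s x::'a. (greenJ x (s * x) \<longrightarrow> greenL x (s * x)) \<and>
                (greenJ x (x * s) \<longrightarrow> greenR x (x * s)))"

definition diagonal_subsemigroup :: "('a::semigroup_mult \<times> 'a) set \<Rightarrow> bool" where
  "diagonal_subsemigroup D \<longleftrightarrow>
     (\<forall>s. (s, s) \<in> D) \<and>
     (\<forall>a b c d. (a, b) \<in> D \<longrightarrow> (c, d) \<in> D \<longrightarrow> (a * c, b * d) \<in> D)"

definition is_congruence :: "('a::semigroup_mult \<times> 'a) set \<Rightarrow> bool" where
  "is_congruence D \<longleftrightarrow> diagonal_subsemigroup D \<and> sym D \<and> trans D"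

definition DSC :: "'a::semigroup_mult itself \<Rightarrow> bool" where
  "DSC _ \<longleftrightarrow> (\<forall>D :: ('a \<times> 'a) set. diagonal_subsemigroup D \<longrightarrow> is_congruence D)"

definition is_group :: "'a::semigroup_mult itself \<Rightarrow> bool" where
  "is_group _ \<longleftrightarrow> (\<exists>e::'a. (\<forall>x. e * x = x \<and> x * e = x) \<and> (\<forall>x. \<exists>y. x * y = e \<and> y * x = e))"

end

theory Submission
  imports Defs
begin

text \<open>A diagonal subsemigroup that links each element only to itself, or that starts inside a
  fixed ideal, is forced by DSC to be symmetric; this makes every ideal the whole semigroup, so
  all elements are \<open>\<J>\<close>-related. Stability then gives \<open>x \<R> xu\<close> and \<open>u \<L> xu\<close>.
  With this, the pairs whose \<open>\<L>\<close>-classes agree and whose \<open>\<R>\<close>-classes either agree or are those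
  of two fixed elements \<open>a\<close>, \<open>b\<close> form a diagonal subsemigroup containing \<open>(ab, bb)\<close>; its symmetry
  yields \<open>a \<R> b\<close>. Dually all elements are \<open>\<L>\<close>-related, so every equation \<open>ax = b\<close>, \<open>ya = b\<close>
  is solvable, which characterises groups.\<close>

lemma two_ideal1_mult_right:
  fixes a x u :: "'a::semigroup_mult"
  assumes "x \<in> two_ideal1 a"
  shows "x * u \<in> two_ideal1 a"
  using assms unfolding two_ideal1_def by (auto simp: mult.assoc; metis mult.assoc)

lemma two_ideal1_mult_left:
  fixes a x u :: "'a::semigroup_mult"
  assumes "u \<in> two_ideal1 a"
  shows "x * u \<in> two_ideal1 a"
  using assms unfolding two_ideal1_def by (auto simp: mult.assoc; metis mult.assoc)

lemma DSC_symD: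
  assumes "DSC TYPE('a::semigroup_mult)" "diagonal_subsemigroup D" "(a, b) \<in> D"
  shows "(b, a) \<in> (D :: ('a \<times> 'a) set)"
  using assms unfolding DSC_def is_congruence_def by (meson symD)

lemma DSC_two_ideal1_eq_UNIV:
  assumes "DSC TYPE('a::semigroup_mult)"
  shows "two_ideal1 (a::'a) = UNIV"
proof -
  have "b \<in> two_ideal1 a" for b
  proof -
    define D where "D = {(x::'a, y). x = y \<or> x \<in> two_ideal1 a}"
    have "diagonal_subsemigroup D"
      unfolding diagonal_subsemigroup_def D_def
      by (blast intro: two_ideal1_mult_right two_ideal1_mult_left)
    moreover have "(a, b) \<in> D" unfolding D_def two_ideal1_def by auto
    ultimately have "(b, a) \<in> D" using assms DSC_symD by blast
    then show ?thesis unfolding D_def two_ideal1_def by auto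
  qed
  then show ?thesis by auto
qed

lemma DSC_greenJ:
  assumes "DSC TYPE('a::semigroup_mult)"
  shows "greenJ (x::'a) y"
  using DSC_two_ideal1_eq_UNIV[OF assms] unfolding greenJ_def by simp

lemma stable_DSC_greenR_mult:
  assumes "stable_semigroup TYPE('a::semigroup_mult)" "DSC TYPE('a)"
  shows "greenR (x::'a) (x * u)"
  using assms DSC_greenJ unfolding stable_semigroup_def by blast

lemma stable_DSC_greenL_mult:
  assumes "stable_semigroup TYPE('a::semigroup_mult)" "DSC TYPE('a)"
  shows "greenL (u::'a) (x * u)"
  using assms DSC_greenJ unfolding stable_semigroup_def by blast

text \<open>In the next two lemmas \<open>g\<close> and \<open>f\<close> stand for the \<open>\<R>\<close>- and the \<open>\<L>\<close>-class of an element.\<close>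

lemma DSC_right_mult_invariant_const:
  fixes f g :: "'a::semigroup_mult \<Rightarrow> 'b"
  assumes "DSC TYPE('a)"
    and g_mult: "\<And>x u. g (x * u) = g x"
    and f_mult: "\<And>x u. f (x * u) = f u"
  shows "g a = g b"
proof -
  define D where "D = {(x, y). f x = f y \<and> (g x = g y \<or> g x = g a \<and> g y = g b)}"
  have "diagonal_subsemigroup D"
    unfolding diagonal_subsemigroup_def D_def by (auto simp: f_mult g_mult)
  moreover have "(a * b, b * b) \<in> D" unfolding D_def by (simp add: f_mult g_mult)
  ultimately have "(b * b, a * b) \<in> D" using assms(1) DSC_symD by blast
  then show ?thesis unfolding D_def by (auto simp: g_mult)
qed

lemma DSC_left_mult_invariant_const:
  fixes f g :: "'a::semigroup_mult \<Rightarrow> 'b"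
  assumes "DSC TYPE('a)"
    and g_mult: "\<And>x u. g (x * u) = g x"
    and f_mult: "\<And>x u. f (x * u) = f u"
  shows "f a = f b"
proof -
  define D where "D = {(x, y). g x = g y \<and> (f x = f y \<or> f x = f a \<and> f y = f b)}"
  have "diagonal_subsemigroup D"
    unfolding diagonal_subsemigroup_def D_def by (auto simp: f_mult g_mult)
  moreover have "(a * a, a * b) \<in> D" unfolding D_def by (simp add: f_mult g_mult)
  ultimately have "(a * b, a * a) \<in> D" using assms(1) DSC_symD by blast
  then show ?thesis unfolding D_def by (auto simp: f_mult)
qed

lemma stable_DSC_greenR:
  assumes "stable_semigroup TYPE('a::semigroup_mult)" "DSC TYPE('a)"
  shows "greenR (a::'a) b"
  using DSC_right_mult_invariant_const[OF assms(2), of right_ideal1 left_ideal1]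
    stable_DSC_greenR_mult[OF assms] stable_DSC_greenL_mult[OF assms]
  unfolding greenR_def greenL_def by metis

lemma stable_DSC_greenL:
  assumes "stable_semigroup TYPE('a::semigroup_mult)" "DSC TYPE('a)"
  shows "greenL (a::'a) b"
  using DSC_left_mult_invariant_const[OF assms(2), of right_ideal1 left_ideal1]
    stable_DSC_greenR_mult[OF assms] stable_DSC_greenL_mult[OF assms]
  unfolding greenR_def greenL_def by metis

lemma greenR_all_imp_right_divisible:
  fixes a b :: "'a::semigroup_mult"
  assumes "\<And>c d::'a. greenR c d"
  shows "\<exists>x. b = a * x"
proof -
  have "a \<in> right_ideal1 (a * a)"
    using assms[of a "a * a"] unfolding greenR_def right_ideal1_def by blast
  then obtain z where z: "a = a * z" unfolding right_ideal1_def by (auto simp: mult.assoc)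
  have "b \<in> right_ideal1 a"
    using assms[of b a] unfolding greenR_def right_ideal1_def by blast
  then show ?thesis using z unfolding right_ideal1_def by auto
qed

lemma greenL_all_imp_left_divisible:
  fixes a b :: "'a::semigroup_mult"
  assumes "\<And>c d::'a. greenL c d"
  shows "\<exists>x. b = x * a"
proof -
  have "a \<in> left_ideal1 (a * a)"
    using assms[of a "a * a"] unfolding greenL_def left_ideal1_def by blast
  then obtain z where z: "a = z * a" unfolding left_ideal1_def by (auto simp: mult.assoc[symmetric])
  have "b \<in> left_ideal1 a"
    using assms[of b a] unfolding greenL_def left_ideal1_def by blast
  then show ?thesis using z unfolding left_ideal1_def by auto
qed

lemma divisible_semigroup_is_group:
  assumes rdiv: "\<And>a b::'a::semigroup_mult. \<exists>x. b = a * x"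
    and ldiv: "\<And>a b::'a. \<exists>x. b = x * a"
  shows "is_group TYPE('a)"
proof -
  fix a :: 'a
  obtain e where e: "a = a * e" using rdiv by blast
  have e_right: "x * e = x" for x
  proof -
    obtain y where "x = y * a" using ldiv by blast
    then show ?thesis using e by (metis mult.assoc)
  qed
  obtain f where f: "a = f * a" using ldiv by blast
  have f_left: "f * x = x" for x
  proof -
    obtain y where "x = a * y" using rdiv by blast
    then show ?thesis using f by (metis mult.assoc)
  qed
  have "e = f" using e_right[of f] f_left[of e] by simp
  have inverse: "\<exists>y. x * y = e \<and> y * x = e" for x
  proof -
    obtain y where y: "e = x * y" using rdiv by blast
    obtain y' where y': "e = y' * x" using ldiv by blast
    have "y' = y" by (metis y y' e_right f_left \<open>e = f\<close> mult.assoc)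
    then show ?thesis using y y' by auto
  qed
  show ?thesis unfolding is_group_def using inverse e_right f_left \<open>e = f\<close> by blast
qed

theorem mainTheorem5:
  assumes "stable_semigroup TYPE('a::semigroup_mult)"
    and "DSC TYPE('a)"
  shows "is_group TYPE('a)"
proof (rule divisible_semigroup_is_group)
  show "\<exists>x. b = a * x" for a b :: 'a
    using greenR_all_imp_right_divisible stable_DSC_greenR[OF assms] by blast
  show "\<exists>x. b = x * a" for a b :: 'a
    using greenL_all_imp_left_divisible stable_DSC_greenL[OF assms] by blast
qed

end
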